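(* Let $G$ be a topological group which is SIN, i.e. the identity of $G$ has a neighbourhood base consisting of open sets $V$ invariant under conjugation ($g^{-1}Vg=V$ for all $g\in G$). Let $(X,\mu)$ be a standard Lebesgue (probability) space. Then the topological group $L^0(X,\mu;G)$ is SIN as well.
   Context: For a topological group $G$ and a standard Lebesgue probability space $(X,\mu)$, $L^0(X,\mu;G)$ denotes the group of all $\mu$-a.e. equivalence classes of strongly (Bourbaki) measurable maps $f\colon X\to G$, i.e. maps such that for every $\varepsilon>0$ there is a compact $K\subseteq X$ with $\mu(K)>1-\varepsilon$ on which $f$ is continuous; the group operations are pointwise. It carries the topology of convergence in measure, a neighbourhood base at the identity being formed by the sets $[V,\varepsilon]=\{f\in L^0(X,\mu;G)\colon \mu\{x\in X\colon f(x)\in V\}>1-\varepsilon\}$, where $V$ runs over a neighbourhood base at the identity of $G$ and $\varepsilon>0$. *)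

theory Defs
  imports "HOL-Analysis.Analysis" "HOL-Probability.Probability"
begin

text \<open>Topological groups are modelled by the type class topological_group_add
  (group_add is NOT assumed commutative, so the group may be non-abelian;
  the group law is written additively: g^{-1} v g becomes -g + v + g).\<close>

definition SIN_group :: "'g::topological_group_add itself \<Rightarrow> bool" where
  "SIN_group _ \<longleftrightarrow>
     (\<forall>U::'g set. open U \<and> 0 \<in> U \<longrightarrow>
        (\<exists>V. open V \<and> 0 \<in> V \<and> V \<subseteq> U \<and> (\<forall>g. \<forall>v\<in>V. - g + v + g \<in> V)))"

text \<open>A standard Lebesgue probability space: a Polish space with a Borel
  probability measure (we measure sets in its completion).\<close>

definition std_prob_space :: "'x::polish_space measure \<Rightarrow> bool" where
  "std_prob_space \<mu> \<longleftrightarrow> prob_space \<mu> \<and> sets \<mu> = sets borel"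

text \<open>Strongly (Bourbaki) measurable maps; L^0 is represented by the set of
  representatives (the topology below does not distinguish a.e.-equal maps).\<close>

definition strongly_measurable :: "'x::polish_space measure \<Rightarrow> ('x \<Rightarrow> 'g::topological_space) \<Rightarrow> bool" where
  "strongly_measurable \<mu> f \<longleftrightarrow>
     (\<forall>\<epsilon>>0. \<exists>K. compact K \<and> measure \<mu> K > 1 - \<epsilon> \<and> continuous_on K f)"

definition L0 :: "'x::polish_space measure \<Rightarrow> ('x \<Rightarrow> 'g::topological_space) set" where
  "L0 \<mu> = {f. strongly_measurable \<mu> f}"

definition L0_nbhd :: "'x::polish_space measure \<Rightarrow> 'g::topological_group_add set \<Rightarrow> real \<Rightarrow> ('x \<Rightarrow> 'g) set" where
  "L0_nbhd \<mu> V \<epsilon> = {f \<in> L0 \<mu>. measure (completion \<mu>) {x \<in> space \<mu>. f x \<in> V} > 1 - \<epsilon>}"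

text \<open>Open sets of the topology of convergence in measure on L^0: sets W such that
  each f in W has a translated basic neighbourhood f[V,eps] inside W.\<close>

definition L0_open :: "'x::polish_space measure \<Rightarrow> ('x \<Rightarrow> 'g::topological_group_add) set \<Rightarrow> bool" where
  "L0_open \<mu> W \<longleftrightarrow> W \<subseteq> L0 \<mu> \<and>
     (\<forall>f\<in>W. \<exists>V \<epsilon>. open V \<and> 0 \<in> V \<and> \<epsilon> > 0 \<and>
        (\<lambda>h x. f x + h x) ` L0_nbhd \<mu> V \<epsilon> \<subseteq> W)"

text \<open>SIN for L^0: every neighbourhood of the identity (i.e. every superset of a
  basic [V,eps]) contains an open conjugation-invariant neighbourhood of the identity.\<close>

definition L0_SIN :: "'x::polish_space measure \<Rightarrow> 'g::topological_group_add itself \<Rightarrow> bool" where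
  "L0_SIN \<mu> _ \<longleftrightarrow>
     (\<forall>(V::'g set) \<epsilon>. open V \<and> 0 \<in> V \<and> \<epsilon> > 0 \<longrightarrow>
        (\<exists>W. L0_open \<mu> W \<and> (\<lambda>x. 0) \<in> W \<and> W \<subseteq> L0_nbhd \<mu> V \<epsilon> \<and>
             (\<forall>g\<in>L0 \<mu>. \<forall>f\<in>W. (\<lambda>x. - g x + f x + g x) \<in> W)))"

end

theory Submission
  imports Defs
begin

text \<open>If V is a conjugation-invariant open neighbourhood of 0, then [V,\<epsilon>] is invariant under
  conjugation by every g in L^0, since g(x)^{-1} f(x) g(x) lies in V exactly when f(x) does.
  As [V,\<epsilon>] need not be open, pass to its invariant core: the f for which some translate
  f [V',\<epsilon>'] with V' invariant still lies in [V,\<epsilon>]. Choosing an invariant U with U U \<subseteq> V'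
  gives [U,\<epsilon>'/2] [U,\<epsilon>'/2] \<subseteq> [V',\<epsilon>'], so the core is open; and
  g^{-1} f g [V',\<epsilon>'] = g^{-1} (f (g [V',\<epsilon>'] g^{-1})) g = g^{-1} (f [V',\<epsilon>']) g, so the core is
  again conjugation-invariant.\<close>

lemma std_prob_spaceD:
  assumes "std_prob_space \<mu>"
  shows "prob_space \<mu>" and "sets \<mu> = sets borel" and "space \<mu> = UNIV"
  using assms unfolding std_prob_space_def by (auto dest: sets_eq_imp_space_eq)

lemma std_prob_space_completion: "std_prob_space \<mu> \<Longrightarrow> prob_space (completion \<mu>)"
  using prob_space.prob_space_completion std_prob_spaceD(1) by blast

lemma (in prob_space) prob_Int_ge:
  assumes "A \<in> events" "B \<in> events"
  shows "prob A + prob B - 1 \<le> prob (A \<inter> B)"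
proof -
  have "prob (A \<union> B) = prob A + prob B - prob (A \<inter> B)"
    using assms by (intro measure_Un3) (auto simp: fmeasurable_def less_top[symmetric])
  then show ?thesis
    using prob_le_1[of "A \<union> B"] by linarith
qed

lemma std_prob_space_tight:
  fixes \<mu> :: "'x::polish_space measure"
  assumes "std_prob_space \<mu>" "e > 0"
  obtains K where "compact K" "measure \<mu> K > 1 - e"
proof -
  interpret prob_space \<mu>
    using std_prob_spaceD(1)[OF assms(1)] .
  have "emeasure \<mu> UNIV = 1"
    using emeasure_space_1 std_prob_spaceD(3)[OF assms(1)] by simp
  then have "ennreal (1 - e) < emeasure \<mu> UNIV"
    using ennreal_lessI[of 1 "1 - e"] assms(2) by simp
  also have "\<dots> = (SUP K \<in> {K. K \<subseteq> UNIV \<and> compact K}. emeasure \<mu> K)"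
    using std_prob_spaceD(2)[OF assms(1)] by (intro inner_regular) auto
  finally obtain K where "compact K" "ennreal (1 - e) < emeasure \<mu> K"
    by (auto simp: less_SUP_iff)
  moreover from this have "1 - e < measure \<mu> K"
    using measure_nonneg[of \<mu> K]
    by (cases "e \<le> 1") (auto simp: emeasure_eq_measure ennreal_less_iff simp del: measure_nonneg)
  ultimately show thesis
    using that by blast
qed

lemma strongly_measurable_const:
  fixes \<mu> :: "'x::polish_space measure"
  assumes "std_prob_space \<mu>"
  shows "strongly_measurable \<mu> (\<lambda>x. c)"
  unfolding strongly_measurable_def
  by (metis std_prob_space_tight[OF assms] continuous_on_const)

lemma strongly_measurable_add:
  fixes \<mu> :: "'x::polish_space measure" and f g :: "'x \<Rightarrow> 'g::topological_monoid_add"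
  assumes std: "std_prob_space \<mu>"
    and f: "strongly_measurable \<mu> f" and g: "strongly_measurable \<mu> g"
  shows "strongly_measurable \<mu> (\<lambda>x. f x + g x)"
  unfolding strongly_measurable_def
proof (intro allI impI)
  fix e :: real
  assume "e > 0"
  interpret prob_space \<mu>
    using std_prob_spaceD(1)[OF std] .
  obtain K1 where K1: "compact K1" "measure \<mu> K1 > 1 - e/2" "continuous_on K1 f"
    using f \<open>e > 0\<close> unfolding strongly_measurable_def by (meson half_gt_zero)
  obtain K2 where K2: "compact K2" "measure \<mu> K2 > 1 - e/2" "continuous_on K2 g"
    using g \<open>e > 0\<close> unfolding strongly_measurable_def by (meson half_gt_zero)
  have "K1 \<in> events" "K2 \<in> events"
    using K1(1) K2(1) std_prob_spaceD(2)[OF std] by (auto intro: borel_closed compact_imp_closed)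
  then have "1 - e < measure \<mu> (K1 \<inter> K2)"
    using prob_Int_ge[of K1 K2] K1(2) K2(2) by linarith
  moreover have "continuous_on (K1 \<inter> K2) (\<lambda>x. f x + g x)"
    using K1(3) K2(3) by (intro continuous_on_add) (auto intro: continuous_on_subset)
  ultimately show "\<exists>K. compact K \<and> 1 - e < measure \<mu> K \<and> continuous_on K (\<lambda>x. f x + g x)"
    using K1(1) K2(1) compact_Int by blast
qed

lemma strongly_measurable_minus:
  fixes f :: "'x::polish_space \<Rightarrow> 'g::topological_group_add"
  assumes "strongly_measurable \<mu> f"
  shows "strongly_measurable \<mu> (\<lambda>x. - f x)"
  using assms unfolding strongly_measurable_def by (metis continuous_on_minus)

lemma strongly_measurable_compact_exhaustion:
  fixes \<mu> :: "'x::polish_space measure"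
  assumes std: "std_prob_space \<mu>" and f: "strongly_measurable \<mu> f"
  obtains K :: "nat \<Rightarrow> 'x set" where "\<And>n. compact (K n)" "\<And>n. continuous_on (K n) f"
    "- (\<Union>n. K n) \<in> null_sets \<mu>"
proof -
  interpret prob_space \<mu>
    using std_prob_spaceD(1)[OF std] .
  have "\<forall>n. \<exists>K. compact K \<and> 1 - 1 / Suc n < measure \<mu> K \<and> continuous_on K f"
    using f unfolding strongly_measurable_def by auto
  then obtain K where K: "\<And>n. compact (K n)" "\<And>n. 1 - 1 / Suc n < measure \<mu> (K n)"
    "\<And>n. continuous_on (K n) f"
    by metis
  have events: "K n \<in> events" for n
    using K(1) std_prob_spaceD(2)[OF std] by (auto intro: borel_closed compact_imp_closed)
  define N where "N = - (\<Union>n. K n)"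
  have N: "N \<in> events"
    using events sets.compl_sets[of "\<Union>n. K n" \<mu>] std_prob_spaceD(3)[OF std]
    unfolding N_def by (auto simp: Compl_eq_Diff_UNIV)
  have "prob N \<le> 1 / Suc n" for n
  proof -
    have "prob N \<le> prob (space \<mu> - K n)"
      using sets.compl_sets[OF events[of n]] std_prob_spaceD(3)[OF std]
      unfolding N_def by (intro finite_measure_mono) auto
    also have "\<dots> = 1 - prob (K n)"
      using prob_compl[OF events] .
    finally show ?thesis
      using K(2)[of n] by linarith
  qed
  then have "prob N = 0"
    by (metis measure_nonneg nat_approx_posE not_le order_antisym)
  then have "N \<in> null_sets \<mu>"
    using N by (simp add: emeasure_eq_measure null_setsI)
  then show thesis
    using K that unfolding N_def by blast
qed

lemma strongly_measurable_vimage_open: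
  fixes \<mu> :: "'x::polish_space measure"
  assumes std: "std_prob_space \<mu>" and f: "strongly_measurable \<mu> f" and "open V"
  shows "{x \<in> space \<mu>. f x \<in> V} \<in> sets (completion \<mu>)"
proof -
  obtain K :: "nat \<Rightarrow> 'x set" where K: "\<And>n. compact (K n)" "\<And>n. continuous_on (K n) f"
    and null: "- (\<Union>n. K n) \<in> null_sets \<mu>"
    using strongly_measurable_compact_exhaustion[OF std f] by blast
  have "\<forall>n. \<exists>T. open T \<and> T \<inter> K n = f -` V \<inter> K n"
    using K(2) \<open>open V\<close> unfolding continuous_on_open_invariant by blast
  then obtain T where T: "\<And>n. open (T n)" "\<And>n. T n \<inter> K n = f -` V \<inter> K n"
    by metis
  have "T n \<inter> K n \<in> sets borel" for n
    using T(1) K(1) by (intro sets.Int borel_open borel_closed compact_imp_closed)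
  then have "(\<Union>n. T n \<inter> K n) \<in> sets borel"
    by (intro sets.countable_UN) auto
  then have "(\<Union>n. T n \<inter> K n) \<in> sets \<mu>"
    using std_prob_spaceD(2)[OF std] by simp
  moreover have "{x \<in> space \<mu>. f x \<in> V} = (\<Union>n. T n \<inter> K n) \<union> (f -` V - (\<Union>n. K n))"
    using T(2) std_prob_spaceD(3)[OF std] by blast
  ultimately show ?thesis
    using null by (intro sets_completionI) auto
qed

lemma L0_const: "std_prob_space \<mu> \<Longrightarrow> (\<lambda>x. c) \<in> L0 \<mu>"
  by (simp add: L0_def strongly_measurable_const)

lemma L0_add:
  "std_prob_space \<mu> \<Longrightarrow> f \<in> L0 \<mu> \<Longrightarrow> g \<in> L0 \<mu> \<Longrightarrow>
    (\<lambda>x. f x + g x :: 'g::topological_monoid_add) \<in> L0 \<mu>"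
  by (simp add: L0_def strongly_measurable_add)

lemma L0_minus: "f \<in> L0 \<mu> \<Longrightarrow> (\<lambda>x. - f x :: 'g::topological_group_add) \<in> L0 \<mu>"
  by (simp add: L0_def strongly_measurable_minus)

lemma L0_conj:
  "std_prob_space \<mu> \<Longrightarrow> f \<in> L0 \<mu> \<Longrightarrow> g \<in> L0 \<mu> \<Longrightarrow>
    (\<lambda>x. - g x + f x + g x :: 'g::topological_group_add) \<in> L0 \<mu>"
  by (intro L0_add L0_minus)

lemma L0_vimage_open_sets:
  "std_prob_space \<mu> \<Longrightarrow> f \<in> L0 \<mu> \<Longrightarrow> open V \<Longrightarrow>
    {x \<in> space \<mu>. f x \<in> V} \<in> sets (completion \<mu>)"
  by (simp add: L0_def strongly_measurable_vimage_open)

lemma zero_in_L0_nbhd: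
  assumes "std_prob_space \<mu>" "0 \<in> V" "e > 0"
  shows "(\<lambda>x. 0) \<in> L0_nbhd \<mu> V e"
  using assms L0_const prob_space.prob_space[OF std_prob_space_completion[OF assms(1)]]
  by (simp add: L0_nbhd_def)

lemma L0_nbhd_mono:
  assumes std: "std_prob_space \<mu>" and "V \<subseteq> V'" "open V'"
  shows "L0_nbhd \<mu> V e \<subseteq> L0_nbhd \<mu> V' e"
proof
  fix f
  assume f: "f \<in> L0_nbhd \<mu> V e"
  interpret C: prob_space "completion \<mu>"
    using std_prob_space_completion[OF std] .
  have "measure (completion \<mu>) {x \<in> space \<mu>. f x \<in> V} \<le> measure (completion \<mu>) {x \<in> space \<mu>. f x \<in> V'}"
    using f assms L0_vimage_open_sets[OF std] by (intro C.finite_measure_mono) (auto simp: L0_nbhd_def)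
  then show "f \<in> L0_nbhd \<mu> V' e"
    using f by (auto simp: L0_nbhd_def)
qed

lemma L0_nbhd_add:
  fixes h1 h2 :: "'x::polish_space \<Rightarrow> 'g::topological_group_add"
  assumes std: "std_prob_space \<mu>" and h1: "h1 \<in> L0_nbhd \<mu> U d" and h2: "h2 \<in> L0_nbhd \<mu> U d"
    and "open U" "open V" and UV: "\<forall>a\<in>U. \<forall>b\<in>U. a + b \<in> V"
  shows "(\<lambda>x. h1 x + h2 x) \<in> L0_nbhd \<mu> V (2 * d)"
proof -
  interpret C: prob_space "completion \<mu>"
    using std_prob_space_completion[OF std] .
  have L0: "h1 \<in> L0 \<mu>" "h2 \<in> L0 \<mu>" "(\<lambda>x. h1 x + h2 x) \<in> L0 \<mu>"
    using h1 h2 L0_add[OF std] by (auto simp: L0_nbhd_def)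
  let ?A1 = "{x \<in> space \<mu>. h1 x \<in> U}" and ?A2 = "{x \<in> space \<mu>. h2 x \<in> U}"
  have "1 - 2 * d < C.prob ?A1 + C.prob ?A2 - 1"
    using h1 h2 by (simp add: L0_nbhd_def)
  also have "\<dots> \<le> C.prob (?A1 \<inter> ?A2)"
    using L0 assms by (intro C.prob_Int_ge L0_vimage_open_sets)
  also have "\<dots> \<le> C.prob {x \<in> space \<mu>. h1 x + h2 x \<in> V}"
    using L0 UV assms by (intro C.finite_measure_mono L0_vimage_open_sets) auto
  finally show ?thesis
    using L0 by (simp add: L0_nbhd_def)
qed

definition conj_invariant :: "'g::group_add set \<Rightarrow> bool" where
  "conj_invariant V \<longleftrightarrow> (\<forall>g. \<forall>v\<in>V. - g + v + g \<in> V)"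

lemma conj_invariant_iff:
  assumes "conj_invariant V"
  shows "- g + v + g \<in> V \<longleftrightarrow> v \<in> V"
proof
  assume "- g + v + g \<in> V"
  then have "- (- g) + (- g + v + g) + - g \<in> V"
    using assms unfolding conj_invariant_def by blast
  then show "v \<in> V"
    by (simp add: add.assoc)
qed (use assms in \<open>auto simp: conj_invariant_def\<close>)

lemma L0_nbhd_conj:
  assumes std: "std_prob_space \<mu>" and "conj_invariant V"
    and k: "k \<in> L0_nbhd \<mu> V e" and g: "g \<in> L0 \<mu>"
  shows "(\<lambda>x. - g x + k x + g x) \<in> L0_nbhd \<mu> V e"
  using k L0_conj[OF std _ g] conj_invariant_iff[OF \<open>conj_invariant V\<close>]
  by (simp add: L0_nbhd_def)

lemma exists_open_add_subset:
  fixes V :: "'g::topological_monoid_add set"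
  assumes "open V" "0 \<in> V"
  obtains U where "open U" "0 \<in> U" "\<forall>a\<in>U. \<forall>b\<in>U. a + b \<in> V"
proof -
  have "open ((\<lambda>p::'g \<times> 'g. fst p + snd p) -` V)"
    using assms(1) by (intro open_vimage continuous_intros)
  moreover have "(0, 0) \<in> (\<lambda>p::'g \<times> 'g. fst p + snd p) -` V"
    using assms(2) by simp
  ultimately obtain A B where "open A" "open B" "0 \<in> A" "0 \<in> B"
    "A \<times> B \<subseteq> (\<lambda>p. fst p + snd p) -` V"
    by (rule open_prod_elim) auto
  then show thesis
    by (intro that[of "A \<inter> B"]) auto
qed

lemma SIN_groupD:
  fixes U :: "'g::topological_group_add set"
  assumes "SIN_group TYPE('g)" "open U" "0 \<in> U"
  obtains V where "open V" "0 \<in> V" "V \<subseteq> U" "conj_invariant V"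
proof -
  have "\<exists>V. open V \<and> 0 \<in> V \<and> V \<subseteq> U \<and> conj_invariant V"
    using assms unfolding SIN_group_def conj_invariant_def by simp
  then show thesis
    using that by blast
qed

definition L0_invariant_core ::
    "'x::polish_space measure \<Rightarrow> ('x \<Rightarrow> 'g::topological_group_add) set \<Rightarrow> ('x \<Rightarrow> 'g) set" where
  "L0_invariant_core \<mu> N = {f \<in> L0 \<mu>. \<exists>V e. open V \<and> 0 \<in> V \<and> conj_invariant V \<and> e > 0 \<and>
     (\<lambda>h x. f x + h x) ` L0_nbhd \<mu> V e \<subseteq> N}"

lemma L0_invariant_core_subset:
  assumes "std_prob_space \<mu>"
  shows "L0_invariant_core \<mu> N \<subseteq> N"
proof
  fix f
  assume "f \<in> L0_invariant_core \<mu> N"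
  then obtain V e where "0 \<in> V" "e > 0" and fV: "(\<lambda>h x. f x + h x) ` L0_nbhd \<mu> V e \<subseteq> N"
    unfolding L0_invariant_core_def by blast
  from subsetD[OF fV imageI[OF zero_in_L0_nbhd[OF assms this(1,2)]]] show "f \<in> N"
    by simp
qed

lemma zero_in_L0_invariant_core:
  assumes "std_prob_space \<mu>" "open V" "0 \<in> V" "conj_invariant V" "e > 0" "L0_nbhd \<mu> V e \<subseteq> N"
  shows "(\<lambda>x. 0) \<in> L0_invariant_core \<mu> N"
proof -
  have "(\<lambda>h x. 0 + h x) ` L0_nbhd \<mu> V e = L0_nbhd \<mu> V e"
    by simp
  then show ?thesis
    using assms L0_const unfolding L0_invariant_core_def by blast
qed

lemma L0_open_invariant_core:
  fixes N :: "('x::polish_space \<Rightarrow> 'g::topological_group_add) set"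
  assumes SIN: "SIN_group TYPE('g)" and std: "std_prob_space \<mu>"
  shows "L0_open \<mu> (L0_invariant_core \<mu> N)"
  unfolding L0_open_def
proof (intro conjI ballI)
  show "L0_invariant_core \<mu> N \<subseteq> L0 \<mu>"
    unfolding L0_invariant_core_def by blast
next
  fix f
  assume "f \<in> L0_invariant_core \<mu> N"
  then obtain V e where f: "f \<in> L0 \<mu>" and V: "open V" "0 \<in> V" "e > 0"
    and fV: "(\<lambda>h x. f x + h x) ` L0_nbhd \<mu> V e \<subseteq> N"
    unfolding L0_invariant_core_def by blast
  obtain U0 where U0: "open U0" "0 \<in> U0" "\<forall>a\<in>U0. \<forall>b\<in>U0. a + b \<in> V"
    using exists_open_add_subset[OF V(1,2)] by blast
  obtain U where U: "open U" "0 \<in> U" "U \<subseteq> U0" "conj_invariant U"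
    using SIN_groupD[OF SIN U0(1,2)] by blast
  have UV: "\<forall>a\<in>U. \<forall>b\<in>U. a + b \<in> V"
    using U(3) U0(3) by blast
  have "e/2 > 0"
    using \<open>e > 0\<close> by simp
  have "(\<lambda>h x. f x + h x) ` L0_nbhd \<mu> U (e/2) \<subseteq> L0_invariant_core \<mu> N"
  proof (rule image_subsetI)
    fix h
    assume h: "h \<in> L0_nbhd \<mu> U (e/2)"
    have "(\<lambda>h' x. f x + h x + h' x) ` L0_nbhd \<mu> U (e/2) \<subseteq> N"
    proof (rule image_subsetI)
      fix h'
      assume h': "h' \<in> L0_nbhd \<mu> U (e/2)"
      have "(\<lambda>x. h x + h' x) \<in> L0_nbhd \<mu> V (2 * (e/2))"
        using U(1) V(1) UV by (rule L0_nbhd_add[OF std h h'])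
      then have "(\<lambda>x. h x + h' x) \<in> L0_nbhd \<mu> V e"
        by simp
      from subsetD[OF fV imageI[OF this]] show "(\<lambda>x. f x + h x + h' x) \<in> N"
        by (simp add: add.assoc)
    qed
    moreover have "(\<lambda>x. f x + h x) \<in> L0 \<mu>"
      using f h L0_add[OF std] by (auto simp: L0_nbhd_def)
    ultimately show "(\<lambda>x. f x + h x) \<in> L0_invariant_core \<mu> N"
      unfolding L0_invariant_core_def using U \<open>e/2 > 0\<close> by blast
  qed
  then show "\<exists>U \<epsilon>. open U \<and> 0 \<in> U \<and> \<epsilon> > 0 \<and> (\<lambda>h x. f x + h x) ` L0_nbhd \<mu> U \<epsilon> \<subseteq> L0_invariant_core \<mu> N"
    using U \<open>e/2 > 0\<close> by blast
qed

lemma L0_invariant_core_conj: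
  assumes std: "std_prob_space \<mu>"
    and N_conj: "\<forall>g\<in>L0 \<mu>. \<forall>f\<in>N. (\<lambda>x. - g x + f x + g x) \<in> N"
    and g: "g \<in> L0 \<mu>" and f: "f \<in> L0_invariant_core \<mu> N"
  shows "(\<lambda>x. - g x + f x + g x) \<in> L0_invariant_core \<mu> N"
proof -
  obtain V e where fL0: "f \<in> L0 \<mu>" and V: "open V" "0 \<in> V" "conj_invariant V" "e > 0"
    and fV: "(\<lambda>h x. f x + h x) ` L0_nbhd \<mu> V e \<subseteq> N"
    using f unfolding L0_invariant_core_def by blast
  have "(\<lambda>h x. - g x + f x + g x + h x) ` L0_nbhd \<mu> V e \<subseteq> N"
  proof (rule image_subsetI)
    fix h
    assume h: "h \<in> L0_nbhd \<mu> V e"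
    have "(\<lambda>x. - (- g x) + h x + - g x) \<in> L0_nbhd \<mu> V e"
      using L0_nbhd_conj[OF std V(3) h L0_minus[OF g]] .
    from subsetD[OF fV imageI[OF this]] have "(\<lambda>x. f x + (g x + h x + - g x)) \<in> N"
      by simp
    then have "(\<lambda>x. - g x + (f x + (g x + h x + - g x)) + g x) \<in> N"
      by (rule N_conj[rule_format, OF g])
    then show "(\<lambda>x. - g x + f x + g x + h x) \<in> N"
      by (simp add: add.assoc)
  qed
  then show ?thesis
    unfolding L0_invariant_core_def using L0_conj[OF std fL0 g] V by blast
qed

theorem lemma1:
  fixes \<mu> :: "'x::polish_space measure"
  assumes "SIN_group TYPE('g::topological_group_add)"
    and "std_prob_space \<mu>"
  shows "L0_SIN \<mu> TYPE('g)"
  unfolding L0_SIN_def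
proof (intro allI impI)
  fix V :: "'g set" and e :: real
  assume V: "open V \<and> 0 \<in> V \<and> e > 0"
  then obtain V1 where V1: "open V1" "0 \<in> V1" "V1 \<subseteq> V" "conj_invariant V1"
    using SIN_groupD[OF assms(1)] by blast
  let ?W = "L0_invariant_core \<mu> (L0_nbhd \<mu> V1 e)"
  have "?W \<subseteq> L0_nbhd \<mu> V e"
    using subset_trans[OF L0_invariant_core_subset L0_nbhd_mono[OF _ V1(3)]] V assms(2) by blast
  moreover have "\<forall>g\<in>L0 \<mu>. \<forall>f\<in>?W. (\<lambda>x. - g x + f x + g x) \<in> ?W"
    using L0_nbhd_conj[OF assms(2) V1(4)] by (intro ballI L0_invariant_core_conj[OF assms(2)]) auto
  ultimately show "\<exists>W. L0_open \<mu> W \<and> (\<lambda>x. 0) \<in> W \<and> W \<subseteq> L0_nbhd \<mu> V e \<and>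
      (\<forall>g\<in>L0 \<mu>. \<forall>f\<in>W. (\<lambda>x. - g x + f x + g x) \<in> W)"
    using L0_open_invariant_core[OF assms] zero_in_L0_invariant_core[OF assms(2) V1(1,2,4) _ order.refl] V
    by (intro exI[of _ ?W]) simp
qed

end
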